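(* Fix integers $m \ge 1$ and $n_1,\dots,n_m \ge 2$, and consider the $m$-dimensional single parity-check product code of dimension $k = \prod_{\ell=1}^m (n_\ell-1)$, transmitted over the binary erasure channel with erasure probability $\epsilon \in [0,1]$ and decoded with Elias' decoder (see context). Let $P_{\mathrm{E}}$ denote the resulting block error probability. Define $\epsilon_0 = \epsilon$ and \[ \epsilon_\ell = \epsilon_{\ell-1}\left(1-(1-\epsilon_{\ell-1})^{n_\ell-1}\right) \quad \text{for } \ell = 1,\dots,m, \] and set $q_{\max} = \epsilon_m$. Then \[ q_{\max} \le P_{\mathrm{E}} \le k\, q_{\max}. \]
   Context: Index set and code. Let $A = \{1,\dots,n_1\}\times\cdots\times\{1,\dots,n_m\}$. The single parity-check product code is the set of binary arrays $x: A \to \{0,1\}$ in which every line in every direction $\ell$ has even weight; a line in direction $\ell$ is obtained by fixing all coordinates except the $\ell$-th. The information positions are $A_{\mathrm{info}} = \{a : a_\ell \le n_\ell-1 \text{ for all } \ell\}$, and a codeword is determined by its entries there. Channel. Each entry is independently erased with probability $\epsilon$ and otherwise received correctly. Notation. For $\ell = 0,\dots,m$ let $A_\ell = \{a \in A : a_i \le n_i-1 \text{ for } i \le \ell\}$. For $a \in A$ and $b \in \{1,\dots,n_\ell\}$, let $a[\ell\leftarrow b]$ denote $a$ with its $\ell$-th coordinate replaced by $b$. Elias' decoder. This decoder processes dimensions $1$ to $m$ in one sweep, applying local SPC decoding to each line. $E_0(a)$ is true iff entry $a$ is not erased. For $\ell \ge 1$ and $a \in A_\ell$, $E_\ell(a)$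 is true iff $E_{\ell-1}(a)$ is true, or $E_{\ell-1}(a[\ell\leftarrow b])$ is true for every $b \ne a_\ell$ with $1 \le b \le n_\ell$. The information bit at $a$ is recovered iff $E_m(a)$ is true, and erased otherwise; the decoder never makes a wrong decision. A block error occurs iff some $a \in A_{\mathrm{info}}$ has $E_m(a)$ false, and $P_{\mathrm{E}}$ is the probability of this event. *)

theory Defs
  imports "HOL-Analysis.Analysis"
begin

text \<open>Coordinates are indexed by 1..m; a position is a function a :: nat => nat with
  a l in {1..n l} for l in {1..m} (and the default value outside, via PiE).\<close>

definition spc_positions :: "nat \<Rightarrow> (nat \<Rightarrow> nat) \<Rightarrow> (nat \<Rightarrow> nat) set" where
  "spc_positions m n = PiE {1..m} (\<lambda>l. {1..n l})"

definition spc_info :: "nat \<Rightarrow> (nat \<Rightarrow> nat) \<Rightarrow> (nat \<Rightarrow> nat) set" where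
  "spc_info m n = {a \<in> spc_positions m n. \<forall>l\<in>{1..m}. a l \<le> n l - 1}"

text \<open>Elias' decoder: elias_E n S l a is E_l(a) when the set of erased positions is S.\<close>
fun elias_E :: "(nat \<Rightarrow> nat) \<Rightarrow> (nat \<Rightarrow> nat) set \<Rightarrow> nat \<Rightarrow> (nat \<Rightarrow> nat) \<Rightarrow> bool" where
  "elias_E n S 0 a = (a \<notin> S)"
| "elias_E n S (Suc l) a =
     (elias_E n S l a \<or>
      (\<forall>b\<in>{1..n (Suc l)}. b \<noteq> a (Suc l) \<longrightarrow> elias_E n S l (a(Suc l := b))))"

definition elias_block_error :: "nat \<Rightarrow> (nat \<Rightarrow> nat) \<Rightarrow> (nat \<Rightarrow> nat) set \<Rightarrow> bool" where
  "elias_block_error m n S = (\<exists>a\<in>spc_info m n. \<not> elias_E n S m a)"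

definition elias_PE :: "nat \<Rightarrow> (nat \<Rightarrow> nat) \<Rightarrow> real \<Rightarrow> real" where
  "elias_PE m n eps =
     (\<Sum>S\<in>Pow (spc_positions m n).
        eps ^ card S * (1 - eps) ^ (card (spc_positions m n) - card S)
        * (if elias_block_error m n S then 1 else 0))"

fun eps_seq :: "(nat \<Rightarrow> nat) \<Rightarrow> real \<Rightarrow> nat \<Rightarrow> real" where
  "eps_seq n eps 0 = eps"
| "eps_seq n eps (Suc l) = eps_seq n eps l * (1 - (1 - eps_seq n eps l) ^ (n (Suc l) - 1))"

end

theory Submission
  imports Defs
begin

text \<open>Whether \<open>E\<^sub>l(a)\<close> holds depends only on the erasures in the sub-array of positions that
  agree with \<open>a\<close> in the coordinates \<open>l+1, \<dots>, m\<close>. The sub-arrays belonging to the \<open>n\<^sub>l - 1\<close>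
  competitors \<open>a[l \<leftarrow> b]\<close> in the recursion for \<open>E\<^sub>l(a)\<close> are pairwise disjoint and disjoint from
  that of \<open>a\<close>, so the events involved are independent and every position fails to be
  recovered after step \<open>l\<close> with probability exactly \<open>\<epsilon>\<^sub>l\<close>. The block error event contains the
  failure of any single information position and is contained in the union of the \<open>k\<close> such
  failures, which gives the two bounds.\<close>

definition erasure_weight :: "real \<Rightarrow> 'a set \<Rightarrow> 'a set \<Rightarrow> real" where
  "erasure_weight e U S = e ^ card S * (1 - e) ^ (card U - card S)"

definition erasure_prob :: "real \<Rightarrow> 'a set \<Rightarrow> ('a set \<Rightarrow> bool) \<Rightarrow> real" where
  "erasure_prob e U P = (\<Sum>S\<in>Pow U. erasure_weight e U S * (if P S then 1 else 0))"

definition depends_only_on :: "('a set \<Rightarrow> bool) \<Rightarrow> 'a set \<Rightarrow> bool" where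
  "depends_only_on P V \<longleftrightarrow> (\<forall>S. P S = P (S \<inter> V))"

lemma depends_only_onD: "depends_only_on P V \<Longrightarrow> P S = P (S \<inter> V)"
  unfolding depends_only_on_def by blast

lemma depends_only_on_mono:
  assumes "depends_only_on P V" "V \<subseteq> W"
  shows "depends_only_on P W"
  unfolding depends_only_on_def
proof
  fix S
  have "S \<inter> W \<inter> V = S \<inter> V" using assms(2) by blast
  then show "P S = P (S \<inter> W)"
    using depends_only_onD[OF assms(1), of S] depends_only_onD[OF assms(1), of "S \<inter> W"] by simp
qed

lemma depends_only_on_not [simp]: "depends_only_on (\<lambda>S. \<not> P S) V \<longleftrightarrow> depends_only_on P V"
  unfolding depends_only_on_def by blast

lemma depends_only_on_disj:
  "depends_only_on P V \<Longrightarrow> depends_only_on Q V \<Longrightarrow> depends_only_on (\<lambda>S. P S \<or> Q S) V"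
  unfolding depends_only_on_def by blast

lemma depends_only_on_Ball:
  assumes "\<And>b. b \<in> B \<Longrightarrow> depends_only_on (P b) (V b)"
  shows "depends_only_on (\<lambda>S. \<forall>b\<in>B. P b S) (\<Union>b\<in>B. V b)"
proof -
  have "depends_only_on (P b) (\<Union>b\<in>B. V b)" if "b \<in> B" for b
    using depends_only_on_mono[OF assms[OF that]] that by blast
  then show ?thesis unfolding depends_only_on_def by blast
qed

lemma sum_Pow_Un_disjoint:
  assumes "finite A" "finite B" "A \<inter> B = {}"
  shows "(\<Sum>S\<in>Pow (A \<union> B). g S) = (\<Sum>S1\<in>Pow A. \<Sum>S2\<in>Pow B. g (S1 \<union> S2))"
proof -
  have "bij_betw (\<lambda>(S1, S2). S1 \<union> S2) (Pow A \<times> Pow B) (Pow (A \<union> B))"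
  proof (rule bij_betw_byWitness[where f' = "\<lambda>S. (S \<inter> A, S \<inter> B)"])
  qed (use assms(3) in auto)
  then have "(\<Sum>S\<in>Pow (A \<union> B). g S) = (\<Sum>(S1, S2)\<in>Pow A \<times> Pow B. g (S1 \<union> S2))"
    by (simp add: sum.reindex_bij_betw[symmetric] split_def)
  then show ?thesis by (simp add: sum.cartesian_product)
qed

lemma erasure_weight_Un:
  assumes "finite A" "finite B" "A \<inter> B = {}" "S1 \<subseteq> A" "S2 \<subseteq> B"
  shows "erasure_weight e (A \<union> B) (S1 \<union> S2) = erasure_weight e A S1 * erasure_weight e B S2"
proof -
  have "finite S1" "finite S2" using assms finite_subset by blast+
  then have card_S: "card (S1 \<union> S2) = card S1 + card S2"
    using assms by (intro card_Un_disjoint) auto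
  have "card S1 \<le> card A" "card S2 \<le> card B" using assms card_mono by blast+
  moreover have "card (A \<union> B) = card A + card B" using assms card_Un_disjoint by blast
  ultimately have "card (A \<union> B) - card (S1 \<union> S2) = (card A - card S1) + (card B - card S2)"
    using card_S by simp
  then show ?thesis unfolding erasure_weight_def using card_S by (simp add: power_add algebra_simps)
qed

lemma sum_erasure_weight: "finite U \<Longrightarrow> (\<Sum>S\<in>Pow U. erasure_weight e U S) = 1"
  using prod_add[of U "\<lambda>_. e" "\<lambda>_. 1 - e"]
  by (auto simp: erasure_weight_def card_Diff_subset finite_subset intro!: sum.cong)

lemma erasure_prob_Un_conj:
  assumes "finite A" "finite B" "A \<inter> B = {}" "depends_only_on P A" "depends_only_on Q B"
  shows "erasure_prob e (A \<union> B) (\<lambda>S. P S \<and> Q S) = erasure_prob e A P * erasure_prob e B Q"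
proof -
  have "erasure_prob e (A \<union> B) (\<lambda>S. P S \<and> Q S) =
      (\<Sum>S1\<in>Pow A. \<Sum>S2\<in>Pow B. erasure_weight e (A \<union> B) (S1 \<union> S2)
         * (if P (S1 \<union> S2) \<and> Q (S1 \<union> S2) then 1 else 0))"
    unfolding erasure_prob_def using assms by (intro sum_Pow_Un_disjoint) auto
  also have "\<dots> = (\<Sum>S1\<in>Pow A. \<Sum>S2\<in>Pow B.
      (erasure_weight e A S1 * (if P S1 then 1 else 0)) * (erasure_weight e B S2 * (if Q S2 then 1 else 0)))"
  proof (intro sum.cong refl)
    fix S1 S2 assume S: "S1 \<in> Pow A" "S2 \<in> Pow B"
    have "(S1 \<union> S2) \<inter> A = S1" "(S1 \<union> S2) \<inter> B = S2" using S assms(3) by blast+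
    then have "P (S1 \<union> S2) = P S1" "Q (S1 \<union> S2) = Q S2"
      using depends_only_onD[OF assms(4)] depends_only_onD[OF assms(5)] by metis+
    then show "erasure_weight e (A \<union> B) (S1 \<union> S2) * (if P (S1 \<union> S2) \<and> Q (S1 \<union> S2) then 1 else 0) =
      (erasure_weight e A S1 * (if P S1 then 1 else 0)) * (erasure_weight e B S2 * (if Q S2 then 1 else 0))"
      using erasure_weight_Un[of A B S1 S2 e] S assms by auto
  qed
  also have "\<dots> = erasure_prob e A P * erasure_prob e B Q"
    unfolding erasure_prob_def by (simp add: sum_product)
  finally show ?thesis .
qed

lemma erasure_prob_True: "finite U \<Longrightarrow> erasure_prob e U (\<lambda>S. True) = 1"
  unfolding erasure_prob_def using sum_erasure_weight by simp

lemma erasure_prob_restrict: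
  assumes "finite U" "V \<subseteq> U" "depends_only_on P V"
  shows "erasure_prob e U P = erasure_prob e V P"
proof -
  have "finite V" using assms finite_subset by blast
  moreover have "depends_only_on (\<lambda>S. True) (U - V)" unfolding depends_only_on_def by simp
  ultimately have "erasure_prob e (V \<union> (U - V)) (\<lambda>S. P S \<and> True) = erasure_prob e V P"
    using erasure_prob_Un_conj[of V "U - V" P "\<lambda>S. True" e] erasure_prob_True[of "U - V" e] assms
    by auto
  moreover have "V \<union> (U - V) = U" using assms(2) by blast
  ultimately show ?thesis by simp
qed

lemma erasure_prob_conj_indep:
  assumes "finite U" "A \<subseteq> U" "B \<subseteq> U" "A \<inter> B = {}"
    and "depends_only_on P A" "depends_only_on Q B"
  shows "erasure_prob e U (\<lambda>S. P S \<and> Q S) = erasure_prob e U P * erasure_prob e U Q"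
proof -
  have fin: "finite A" "finite B" using assms finite_subset by blast+
  have "depends_only_on (\<lambda>S. P S \<and> Q S) (A \<union> B)"
    using depends_only_on_mono[OF assms(5), of "A \<union> B"] depends_only_on_mono[OF assms(6), of "A \<union> B"]
    unfolding depends_only_on_def by blast
  then have "erasure_prob e U (\<lambda>S. P S \<and> Q S) = erasure_prob e (A \<union> B) (\<lambda>S. P S \<and> Q S)"
    using assms by (intro erasure_prob_restrict) auto
  also have "\<dots> = erasure_prob e A P * erasure_prob e B Q"
    using fin assms by (intro erasure_prob_Un_conj)
  also have "\<dots> = erasure_prob e U P * erasure_prob e U Q"
    using erasure_prob_restrict[of U A P e] erasure_prob_restrict[of U B Q e] assms by simp
  finally show ?thesis .
qed

lemma erasure_prob_Ball_indep:
  assumes "finite U" "finite B" "\<And>b. b \<in> B \<Longrightarrow> V b \<subseteq> U" "disjoint_family_on V B"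
    and "\<And>b. b \<in> B \<Longrightarrow> depends_only_on (P b) (V b)"
  shows "erasure_prob e U (\<lambda>S. \<forall>b\<in>B. P b S) = (\<Prod>b\<in>B. erasure_prob e U (P b))"
  using assms(2-5)
proof (induction B rule: finite_induct)
  case empty
  then show ?case using erasure_prob_True[OF assms(1)] by simp
next
  case (insert x F)
  have "erasure_prob e U (\<lambda>S. \<forall>b\<in>insert x F. P b S) =
      erasure_prob e U (\<lambda>S. P x S \<and> (\<forall>b\<in>F. P b S))"
    by simp
  also have "\<dots> = erasure_prob e U (P x) * erasure_prob e U (\<lambda>S. \<forall>b\<in>F. P b S)"
    using insert assms(1) disjoint_family_on_insert[of x F V]
    by (intro erasure_prob_conj_indep[where A = "V x" and B = "\<Union>b\<in>F. V b"] depends_only_on_Ball) auto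
  also have "\<dots> = (\<Prod>b\<in>insert x F. erasure_prob e U (P b))"
    using insert disjoint_family_on_insert[of x F V] by simp
  finally show ?case .
qed

lemma erasure_prob_not: "finite U \<Longrightarrow> erasure_prob e U (\<lambda>S. \<not> P S) = 1 - erasure_prob e U P"
  using sum_erasure_weight[of U e]
  unfolding erasure_prob_def by (simp add: eq_diff_eq sum.distrib[symmetric] if_distrib cong: if_cong)

lemma erasure_weight_nonneg: "0 \<le> e \<Longrightarrow> e \<le> 1 \<Longrightarrow> 0 \<le> erasure_weight e U S"
  unfolding erasure_weight_def by simp

lemma erasure_prob_mono:
  assumes "0 \<le> e" "e \<le> 1" "\<And>S. P S \<Longrightarrow> Q S"
  shows "erasure_prob e U P \<le> erasure_prob e U Q"
  unfolding erasure_prob_def using assms erasure_weight_nonneg[OF assms(1,2)]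
  by (intro sum_mono) (auto intro: mult_left_mono)

lemma erasure_prob_Bex_le_sum:
  assumes "0 \<le> e" "e \<le> 1" "finite I"
  shows "erasure_prob e U (\<lambda>S. \<exists>i\<in>I. P i S) \<le> (\<Sum>i\<in>I. erasure_prob e U (P i))"
proof -
  have indicator_le: "(if \<exists>i\<in>I. P i S then 1 else 0) \<le> (\<Sum>i\<in>I. if P i S then 1 else (0::real))" for S
  proof (cases "\<exists>i\<in>I. P i S")
    case True
    then obtain i where "i \<in> I" "P i S" by blast
    then have "(if P i S then 1 else 0) \<le> (\<Sum>i\<in>I. if P i S then 1 else (0::real))"
      using assms(3) by (intro member_le_sum) auto
    then show ?thesis using \<open>P i S\<close> by simp
  qed (simp add: sum_nonneg)
  have "erasure_prob e U (\<lambda>S. \<exists>i\<in>I. P i S)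
      \<le> (\<Sum>S\<in>Pow U. erasure_weight e U S * (\<Sum>i\<in>I. if P i S then 1 else 0))"
    unfolding erasure_prob_def
    by (intro sum_mono mult_left_mono indicator_le erasure_weight_nonneg assms)
  also have "\<dots> = (\<Sum>i\<in>I. erasure_prob e U (P i))"
    unfolding erasure_prob_def sum_distrib_left by (rule sum.swap)
  finally show ?thesis .
qed

definition elias_support :: "nat \<Rightarrow> (nat \<Rightarrow> nat) \<Rightarrow> nat \<Rightarrow> (nat \<Rightarrow> nat) \<Rightarrow> (nat \<Rightarrow> nat) set" where
  "elias_support m n l a = {c \<in> spc_positions m n. \<forall>i\<in>{l<..m}. c i = a i}"

lemma finite_spc_positions: "finite (spc_positions m n)"
  unfolding spc_positions_def by (intro finite_PiE) auto

lemma spc_positions_fun_upd: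
  assumes "a \<in> spc_positions m n" "k \<in> {1..m}" "b \<in> {1..n k}"
  shows "a(k := b) \<in> spc_positions m n"
  using assms unfolding spc_positions_def by (auto simp: PiE_iff extensional_def)

lemma elias_support_subset: "elias_support m n l a \<subseteq> spc_positions m n"
  unfolding elias_support_def by auto

lemma elias_support_Suc: "elias_support m n l a \<subseteq> elias_support m n (Suc l) a"
  unfolding elias_support_def by auto

lemma elias_support_fun_upd_Suc: "elias_support m n l (a(Suc l := b)) \<subseteq> elias_support m n (Suc l) a"
  unfolding elias_support_def by auto

lemma disjoint_family_on_elias_support_fun_upd:
  assumes "Suc l \<le> m"
  shows "disjoint_family_on (\<lambda>b. elias_support m n l (a(Suc l := b))) B"
proof -
  have "c (Suc l) = b" if "c \<in> elias_support m n l (a(Suc l := b))" for b c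
    using that assms unfolding elias_support_def by force
  then show ?thesis unfolding disjoint_family_on_def by blast
qed

lemma elias_E_Suc_iff:
  "elias_E n S (Suc l) a \<longleftrightarrow>
     elias_E n S l a \<or> (\<forall>b\<in>{1..n (Suc l)} - {a (Suc l)}. elias_E n S l (a(Suc l := b)))"
  by auto

lemma elias_E_depends_only_on_support:
  "a \<in> spc_positions m n \<Longrightarrow> l \<le> m \<Longrightarrow>
   depends_only_on (\<lambda>S. elias_E n S l a) (elias_support m n l a)"
proof (induction l arbitrary: a)
  case 0
  then have "a \<in> elias_support m n 0 a" unfolding elias_support_def by auto
  then show ?case unfolding depends_only_on_def by auto
next
  case (Suc l)
  define B where "B = {1..n (Suc l)} - {a (Suc l)}"
  have upd: "a(Suc l := b) \<in> spc_positions m n" if "b \<in> B" for b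
    using spc_positions_fun_upd Suc.prems that unfolding B_def by simp
  have "depends_only_on (\<lambda>S. elias_E n S l a) (elias_support m n (Suc l) a)"
    using Suc by (intro depends_only_on_mono[OF _ elias_support_Suc]) simp
  moreover have "depends_only_on (\<lambda>S. \<forall>b\<in>B. elias_E n S l (a(Suc l := b)))
      (elias_support m n (Suc l) a)"
  proof (rule depends_only_on_mono[OF depends_only_on_Ball])
    show "depends_only_on (\<lambda>S. elias_E n S l (a(Suc l := b))) (elias_support m n l (a(Suc l := b)))"
      if "b \<in> B" for b
      by (rule Suc.IH[OF upd[OF that]]) (use Suc.prems in simp)
    show "(\<Union>b\<in>B. elias_support m n l (a(Suc l := b))) \<subseteq> elias_support m n (Suc l) a"
      using elias_support_fun_upd_Suc by blast
  qed
  ultimately show ?case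
    unfolding elias_E_Suc_iff B_def[symmetric] by (rule depends_only_on_disj)
qed

lemma elias_E_fun_upd_depends_only_on_support:
  assumes "a \<in> spc_positions m n" "Suc l \<le> m" "b \<in> {1..n (Suc l)}"
  shows "depends_only_on (\<lambda>S. elias_E n S l (a(Suc l := b))) (elias_support m n l (a(Suc l := b)))"
  using assms spc_positions_fun_upd by (intro elias_E_depends_only_on_support) auto

lemma erasure_prob_Ball_elias_E_fun_upd:
  assumes a: "a \<in> spc_positions m n" and l: "Suc l \<le> m"
    and prob_l: "\<And>c. c \<in> spc_positions m n \<Longrightarrow>
      erasure_prob e (spc_positions m n) (\<lambda>S. \<not> elias_E n S l c) = p"
  shows "erasure_prob e (spc_positions m n)
      (\<lambda>S. \<forall>b\<in>{1..n (Suc l)} - {a (Suc l)}. elias_E n S l (a(Suc l := b)))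
    = (1 - p) ^ (n (Suc l) - 1)"
proof -
  define U where "U = spc_positions m n"
  define B where "B = {1..n (Suc l)} - {a (Suc l)}"
  have fU: "finite U" unfolding U_def by (rule finite_spc_positions)
  have "a (Suc l) \<in> {1..n (Suc l)}"
    using a l unfolding spc_positions_def by (auto simp: PiE_iff)
  then have card_B: "card B = n (Suc l) - 1" unfolding B_def by simp
  have prob_upd: "erasure_prob e U (\<lambda>S. elias_E n S l (a(Suc l := b))) = 1 - p" if "b \<in> B" for b
  proof -
    have "erasure_prob e U (\<lambda>S. \<not> elias_E n S l (a(Suc l := b))) = p"
      using prob_l spc_positions_fun_upd[OF a] that l unfolding U_def B_def by simp
    then show ?thesis
      using erasure_prob_not[OF fU, where P = "\<lambda>S. \<not> elias_E n S l (a(Suc l := b))"] by simp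
  qed
  have "erasure_prob e U (\<lambda>S. \<forall>b\<in>B. elias_E n S l (a(Suc l := b)))
      = (\<Prod>b\<in>B. erasure_prob e U (\<lambda>S. elias_E n S l (a(Suc l := b))))"
    using elias_support_subset elias_E_fun_upd_depends_only_on_support[OF a l]
      disjoint_family_on_elias_support_fun_upd[OF l]
    unfolding U_def B_def
    by (intro erasure_prob_Ball_indep[where V = "\<lambda>b. elias_support m n l (a(Suc l := b))"]
        finite_spc_positions) auto
  then show ?thesis using prob_upd card_B unfolding U_def B_def by simp
qed

lemma erasure_prob_not_elias_E_Suc:
  assumes a: "a \<in> spc_positions m n" and l: "Suc l \<le> m"
    and prob_l: "\<And>c. c \<in> spc_positions m n \<Longrightarrow>
      erasure_prob e (spc_positions m n) (\<lambda>S. \<not> elias_E n S l c) = p"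
  shows "erasure_prob e (spc_positions m n) (\<lambda>S. \<not> elias_E n S (Suc l) a)
    = p * (1 - (1 - p) ^ (n (Suc l) - 1))"
proof -
  define U where "U = spc_positions m n"
  define B where "B = {1..n (Suc l)} - {a (Suc l)}"
  define D where "D = (\<Union>b\<in>B. elias_support m n l (a(Suc l := b)))"
  have fU: "finite U" unfolding U_def by (rule finite_spc_positions)
  have "erasure_prob e U (\<lambda>S. \<not> elias_E n S (Suc l) a) =
      erasure_prob e U (\<lambda>S. \<not> elias_E n S l a \<and> \<not> (\<forall>b\<in>B. elias_E n S l (a(Suc l := b))))"
    unfolding elias_E_Suc_iff B_def by simp
  also have "\<dots> = erasure_prob e U (\<lambda>S. \<not> elias_E n S l a)
      * erasure_prob e U (\<lambda>S. \<not> (\<forall>b\<in>B. elias_E n S l (a(Suc l := b))))"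
  proof (rule erasure_prob_conj_indep[OF fU, where A = "elias_support m n l a" and B = D])
    show "elias_support m n l a \<subseteq> U" "D \<subseteq> U"
      using elias_support_subset unfolding U_def D_def by blast+
    show "elias_support m n l a \<inter> D = {}"
      using l unfolding elias_support_def D_def B_def by auto
    show "depends_only_on (\<lambda>S. \<not> elias_E n S l a) (elias_support m n l a)"
      using elias_E_depends_only_on_support[OF a] l by simp
    show "depends_only_on (\<lambda>S. \<not> (\<forall>b\<in>B. elias_E n S l (a(Suc l := b)))) D"
      unfolding depends_only_on_not D_def
      by (rule depends_only_on_Ball, rule elias_E_fun_upd_depends_only_on_support[OF a l])
        (simp add: B_def)
  qed
  also have "\<dots> = p * (1 - (1 - p) ^ (n (Suc l) - 1))"
    using prob_l[OF a] erasure_prob_Ball_elias_E_fun_upd[OF a l prob_l]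
      erasure_prob_not[OF fU, where P = "\<lambda>S. \<forall>b\<in>B. elias_E n S l (a(Suc l := b))"]
    unfolding U_def B_def by (simp only:)
  finally show ?thesis unfolding U_def .
qed

lemma erasure_prob_not_elias_E:
  "a \<in> spc_positions m n \<Longrightarrow> l \<le> m \<Longrightarrow>
   erasure_prob e (spc_positions m n) (\<lambda>S. \<not> elias_E n S l a) = eps_seq n e l"
proof (induction l arbitrary: a)
  case 0
  have "depends_only_on (\<lambda>S. \<not> elias_E n S 0 a) {a}"
    unfolding depends_only_on_def by auto
  then have "erasure_prob e (spc_positions m n) (\<lambda>S. \<not> elias_E n S 0 a)
      = erasure_prob e {a} (\<lambda>S. \<not> elias_E n S 0 a)"
    using 0 finite_spc_positions by (intro erasure_prob_restrict) auto
  also have "\<dots> = e"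
  proof -
    have "Pow {a} = {{}, {a}}" by blast
    then show ?thesis by (simp add: erasure_prob_def erasure_weight_def)
  qed
  finally show ?case by simp
next
  case (Suc l)
  then show ?case using erasure_prob_not_elias_E_Suc[of a m n l e "eps_seq n e l"] by simp
qed

lemma spc_info_eq_PiE: "spc_info m n = PiE {1..m} (\<lambda>l. {1..n l - 1})"
  unfolding spc_info_def spc_positions_def
  by (auto simp: PiE_iff extensional_def) (meson atLeastAtMost_iff diff_le_self order_trans)

lemma elias_PE_eq_erasure_prob:
  "elias_PE m n e = erasure_prob e (spc_positions m n) (elias_block_error m n)"
  unfolding elias_PE_def erasure_prob_def erasure_weight_def ..

theorem theorem1:
  fixes m :: nat and n :: "nat \<Rightarrow> nat" and eps :: real
  assumes "m \<ge> 1" and "\<forall>l\<in>{1..m}. n l \<ge> 2" and "0 \<le> eps" and "eps \<le> 1"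
  shows "eps_seq n eps m \<le> elias_PE m n eps \<and>
         elias_PE m n eps \<le> real (\<Prod>l\<in>{1..m}. n l - 1) * eps_seq n eps m"
proof -
  define U where "U = spc_positions m n"
  define I where "I = spc_info m n"
  have PE: "elias_PE m n eps = erasure_prob eps U (\<lambda>S. \<exists>a\<in>I. \<not> elias_E n S m a)"
    unfolding elias_PE_eq_erasure_prob elias_block_error_def U_def I_def ..
  have prob_a: "erasure_prob eps U (\<lambda>S. \<not> elias_E n S m a) = eps_seq n eps m" if "a \<in> I" for a
    using erasure_prob_not_elias_E[of a m n m eps] that unfolding U_def I_def spc_info_def by simp
  have "restrict (\<lambda>_. 1) {1..m} \<in> I"
    using assms(2) unfolding I_def spc_info_eq_PiE by (auto simp: PiE_iff)
  then have lower: "eps_seq n eps m \<le> elias_PE m n eps"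
    unfolding PE using prob_a assms(3,4) by (metis (mono_tags) erasure_prob_mono)
  have "elias_PE m n eps \<le> (\<Sum>a\<in>I. erasure_prob eps U (\<lambda>S. \<not> elias_E n S m a))"
    unfolding PE I_def spc_info_eq_PiE using assms(3,4) by (intro erasure_prob_Bex_le_sum finite_PiE) auto
  also have "\<dots> = real (card I) * eps_seq n eps m" using prob_a by simp
  also have "card I = (\<Prod>l\<in>{1..m}. n l - 1)" unfolding I_def spc_info_eq_PiE by (simp add: card_PiE)
  finally show ?thesis using lower by simp
qed

end
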